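(* Let $r\ge2$, $m>1$ and $1\le t\le 2^m-1$ be integers, and let $\mathcal C$ be a binary linear code with coordinates indexed by $\Omega_t^{(m)}$ such that every row of $H_t^{(m)}$ lies in the dual code $\mathcal C^\perp$. Let $m_0\in[m]$ satisfy $2^{m_0-1}-1<t\le2^{m_0}-1$, and set $t_1=2^{m_0-1}-1$, $t_2=t-t_1-1$, $A=\Omega_{t_1}^{(m)}$, $B=\Omega_t^{(m)}\setminus A$, and for $j\in\mathbb Z_r$, $A_j=\{(i_m,\dots,i_1)\in A: i_{m_0}=j\}$. For $j\in\mathbb Z_{r+1}$ let $\psi_j:\mathbb Z_{r+1}^{m-1}\to\mathbb Z_{r+1}^m$ insert $j$ as the new $m_0$-th coordinate from the right, i.e. $\psi_j(i_{m-1},\dots,i_{m_0},i_{m_0-1},\dots,i_1)=(i_{m-1},\dots,i_{m_0},j,i_{m_0-1},\dots,i_1)$. Then: 1) for each $j\in\mathbb Z_r$, $\psi_j$ restricts to a bijection $\Omega_{t_1}^{(m-1)}\to A_j$, and for every codeword $x\in\mathcal C$ and every $\alpha\in\Omega_{t_1}^{(m-1)}\setminus\Omega_0^{(m-1)}$, $x_{\psi_j(\alpha)}=\sum_{\beta\in\mathcal L^{(m-1)}(\alpha)}x_{\psi_j(\beta)}$ (i.e. the punctured code $\mathcal C|_{A_j}$, re-indexed via $\psi_j$, has a parity-check matrix containing all rows of $H_{t_1}^{(m-1)}$); 2) if $t_2\ge1$, $\psi_r$ restricts to a bijection $\Omega_{t_2}^{(m-1)}\to B$, and for every $x\in\mathcal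 C$ and every $\alpha\in\Omega_{t_2}^{(m-1)}\setminus\Omega_0^{(m-1)}$, $x_{\psi_r(\alpha)}=\sum_{\beta\in\mathcal L^{(m-1)}(\alpha)}x_{\psi_r(\beta)}$ (i.e. $\mathcal C|_B$, re-indexed via $\psi_r$, has a parity-check matrix containing all rows of $H_{t_2}^{(m-1)}$).
   Context: For any $m'\ge1$: $\mathbb Z_r=\{0,\dots,r-1\}\subseteq\mathbb Z_{r+1}=\{0,\dots,r\}$ as sets; elements of $\mathbb Z_{r+1}^{m'}$ are written $\alpha=(i_{m'},\dots,i_1)$, $i_\ell$ being the $\ell$-th coordinate from the right. $\mathbf U^{(m')}(\alpha)=\{\ell: i_\ell=r\}$, $\mathbf T^{(m')}(\alpha)=\{\ell: i_\ell\in\mathbb Z_r\}$, $\mathcal L^{(m')}(\alpha)=\{(j_{m'},\dots,j_1)\in\mathbb Z_r^{m'}: j_\ell=i_\ell\ \forall\ell\in\mathbf T^{(m')}(\alpha)\}$. For $0\le s\le2^{m'}-1$ with binary expansion $s=\sum_\ell\lambda_\ell2^{\ell-1}$, $\mathrm{supp}_{m'}(s)=\{\ell:\lambda_\ell=1\}$; $\Gamma_s^{(m')}=\{\alpha\in\mathbb Z_{r+1}^{m'}:\mathbf U^{(m')}(\alpha)=\mathrm{supp}_{m'}(s)\}$ and $\Omega_s^{(m')}=\bigcup_{\ell=0}^s\Gamma_\ell^{(m')}$. $H_t^{(m')}$ is the binary matrix with rows indexed by $\Omega_t^{(m')}\setminus\Omega_0^{(m')}$, columns by $\Omega_t^{(m')}$,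 entry $(\alpha,\beta)$ equal to $1$ iff $\beta\in\mathcal L^{(m')}(\alpha)\cup\{\alpha\}$. Equivalently, all rows of $H_t^{(m')}$ lie in $\mathcal C^\perp$ iff $x_\alpha=\sum_{\beta\in\mathcal L^{(m')}(\alpha)}x_\beta$ for all $x\in\mathcal C$ and all $\alpha\in\Omega_t^{(m')}\setminus\Omega_0^{(m')}$. *)

theory Defs
  imports Main "HOL-Library.Z2"
begin

text \<open>An element of Z_{r+1}^m is a function nat => nat; coordinate l (1 <= l <= m) is
  the l-th coordinate from the right; outside {1..m} the function is 0.\<close>

definition vecs :: "nat \<Rightarrow> nat \<Rightarrow> (nat \<Rightarrow> nat) set" where
  "vecs q m = {\<alpha>. (\<forall>l\<in>{1..m}. \<alpha> l < q) \<and> (\<forall>l. l \<notin> {1..m} \<longrightarrow> \<alpha> l = 0)}"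

definition Uset :: "nat \<Rightarrow> nat \<Rightarrow> (nat \<Rightarrow> nat) \<Rightarrow> nat set" where
  "Uset r m \<alpha> = {l\<in>{1..m}. \<alpha> l = r}"

definition Tset :: "nat \<Rightarrow> nat \<Rightarrow> (nat \<Rightarrow> nat) \<Rightarrow> nat set" where
  "Tset r m \<alpha> = {l\<in>{1..m}. \<alpha> l < r}"

definition Lset :: "nat \<Rightarrow> nat \<Rightarrow> (nat \<Rightarrow> nat) \<Rightarrow> (nat \<Rightarrow> nat) set" where
  "Lset r m \<alpha> = {\<beta>\<in>vecs r m. \<forall>l\<in>Tset r m \<alpha>. \<beta> l = \<alpha> l}"

definition suppb :: "nat \<Rightarrow> nat \<Rightarrow> nat set" where
  "suppb m s = {l\<in>{1..m}. odd (s div 2 ^ (l - 1))}"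

definition Gamma :: "nat \<Rightarrow> nat \<Rightarrow> nat \<Rightarrow> (nat \<Rightarrow> nat) set" where
  "Gamma r m s = {\<alpha>\<in>vecs (Suc r) m. Uset r m \<alpha> = suppb m s}"

definition Omega :: "nat \<Rightarrow> nat \<Rightarrow> nat \<Rightarrow> (nat \<Rightarrow> nat) set" where
  "Omega r m s = (\<Union>l\<in>{0..s}. Gamma r m l)"

definition Hrow :: "nat \<Rightarrow> nat \<Rightarrow> nat \<Rightarrow> (nat \<Rightarrow> nat) \<Rightarrow> (nat \<Rightarrow> nat) \<Rightarrow> bit" where
  "Hrow r m t \<alpha> = (\<lambda>\<beta>. if \<beta> \<in> Omega r m t \<and> \<beta> \<in> Lset r m \<alpha> \<union> {\<alpha>} then 1 else 0)"

definition words :: "'i set \<Rightarrow> ('i \<Rightarrow> bit) set" where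
  "words I = {x. \<forall>i. i \<notin> I \<longrightarrow> x i = 0}"

definition binary_linear_code :: "'i set \<Rightarrow> ('i \<Rightarrow> bit) set \<Rightarrow> bool" where
  "binary_linear_code I C \<longleftrightarrow> C \<subseteq> words I \<and> (\<lambda>i. 0) \<in> C \<and> (\<forall>x\<in>C. \<forall>y\<in>C. (\<lambda>i. x i + y i) \<in> C)"

definition dual_code :: "'i set \<Rightarrow> ('i \<Rightarrow> bit) set \<Rightarrow> ('i \<Rightarrow> bit) set" where
  "dual_code I C = {y\<in>words I. \<forall>x\<in>C. (\<Sum>i\<in>I. x i * y i) = 0}"

definition psi :: "nat \<Rightarrow> nat \<Rightarrow> (nat \<Rightarrow> nat) \<Rightarrow> (nat \<Rightarrow> nat)" where
  "psi m0 j \<alpha> = (\<lambda>l. if l < m0 then \<alpha> l else if l = m0 then j else \<alpha> (l - 1))"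

end

theory Submission
  imports Defs
begin

text \<open>With \<open>bin_value U = (\<Sum>i\<in>U. 2^(i-1))\<close>, every \<open>U \<subseteq> {1..m}\<close> is the binary support of
  \<open>bin_value U\<close>, so \<open>Omega r m s\<close> consists of the \<open>\<alpha>\<close> with \<open>bin_value (Uset r m \<alpha>) \<le> s\<close>, and
  \<open>Omega r m (2^k - 1)\<close> of those with \<open>Uset r m \<alpha> \<subseteq> {1..k}\<close>. If \<open>Uset \<alpha>\<close> lies below \<open>m0\<close>,
  inserting a coordinate \<open>j < r\<close> at position \<open>m0\<close> leaves \<open>Uset\<close> unchanged, while inserting \<open>r\<close>
  adds \<open>m0\<close> to it and \<open>2^(m0-1)\<close> to its value; this gives both bijections. Moreover
  \<open>Lset (\<psi>\<^sub>j \<alpha>) = \<psi>\<^sub>j ` Lset \<alpha>\<close> for \<open>j < r\<close> and \<open>Lset (\<psi>\<^sub>r \<alpha>) = (\<Union>k<r. \<psi>\<^sub>k ` Lset \<alpha>)\<close>, so the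
  parity check of \<open>C\<close> at \<open>\<psi>\<^sub>j \<alpha>\<close> is the re-indexed check at \<open>\<alpha>\<close>; at \<open>\<psi>\<^sub>r \<alpha>\<close> the resulting double
  sum collapses because the checks at \<open>\<psi>\<^sub>r \<beta>\<close>, \<open>\<beta> \<in> vecs r (m-1)\<close>, read
  \<open>x (\<psi>\<^sub>r \<beta>) = (\<Sum>k<r. x (\<psi>\<^sub>k \<beta>))\<close>.\<close>

definition bin_value :: "nat set \<Rightarrow> nat" where
  "bin_value U = (\<Sum>i\<in>U. 2 ^ (i - 1))"

lemma suppb_Suc: "suppb (Suc m) l = suppb m l \<union> (if odd (l div 2 ^ m) then {Suc m} else {})"
  unfolding suppb_def by (auto simp: le_Suc_eq)

lemma bin_value_suppb: "bin_value (suppb m l) = l mod 2 ^ m"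
proof (induction m)
  case 0
  then show ?case by (simp add: bin_value_def suppb_def)
next
  case (Suc m)
  have "finite (suppb m l)" "Suc m \<notin> suppb m l"
    by (simp_all add: suppb_def)
  moreover have "l mod 2 ^ Suc m = 2 ^ m * (l div 2 ^ m mod 2) + l mod 2 ^ m"
    by (metis mod_mult2_eq power_Suc2)
  ultimately show ?case
    using Suc by (auto simp: suppb_Suc bin_value_def odd_iff_mod_2_eq_one even_iff_mod_2_eq_zero)
qed

lemma bin_value_insert: "finite U \<Longrightarrow> i \<notin> U \<Longrightarrow> bin_value (insert i U) = bin_value U + 2 ^ (i - 1)"
  by (simp add: bin_value_def)

lemma bin_value_less: "U \<subseteq> {1..k} \<Longrightarrow> bin_value U < 2 ^ k"
proof (induction k arbitrary: U)
  case 0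
  then show ?case by (simp add: bin_value_def)
next
  case (Suc k)
  have "finite U"
    using Suc.prems finite_subset by blast
  then have "bin_value U \<le> bin_value (U - {Suc k}) + 2 ^ k"
    by (cases "Suc k \<in> U") (simp_all add: bin_value_def sum.remove)
  moreover have "bin_value (U - {Suc k}) < 2 ^ k"
    using Suc by (intro Suc.IH) auto
  ultimately show ?case by simp
qed

lemma bin_value_less_iff: "U \<subseteq> {1..m} \<Longrightarrow> bin_value U < 2 ^ k \<longleftrightarrow> U \<subseteq> {1..k}"
proof
  assume U: "U \<subseteq> {1..m}" and less: "bin_value U < 2 ^ k"
  show "U \<subseteq> {1..k}"
  proof
    fix i assume "i \<in> U"
    moreover have "finite U"
      using U finite_subset by blast
    ultimately have "2 ^ (i - 1) < (2::nat) ^ k"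
      using less unfolding bin_value_def by (meson le_less_trans member_le_sum zero_le)
    then show "i \<in> {1..k}"
      using \<open>i \<in> U\<close> U by auto
  qed
qed (rule bin_value_less)

text \<open>\<open>suppb m\<close> is injective on \<open>{..<2^m}\<close>, with left inverse \<open>bin_value\<close>, and both
  \<open>{..<2^m}\<close> and \<open>Pow {1..m}\<close> have \<open>2^m\<close> elements.\<close>
lemma subset_eq_suppb:
  assumes "U \<subseteq> {1..m}"
  obtains l where "l < 2 ^ m" "U = suppb m l"
proof -
  have "inj_on (suppb m) {..<2 ^ m}"
    by (rule inj_on_inverseI[of _ bin_value]) (simp add: bin_value_suppb)
  then have "card (suppb m ` {..<2 ^ m}) = card (Pow {1..m})"
    by (simp add: card_image card_Pow)
  moreover have "suppb m ` {..<2 ^ m} \<subseteq> Pow {1..m}"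
    by (auto simp: suppb_def)
  ultimately have "suppb m ` {..<2 ^ m} = Pow {1..m}"
    by (simp add: card_subset_eq)
  then show ?thesis
    using assms that by blast
qed

lemma Uset_subset: "Uset r m \<alpha> \<subseteq> {1..m}"
  by (auto simp: Uset_def)

lemma Omega_iff: "\<alpha> \<in> Omega r m s \<longleftrightarrow> \<alpha> \<in> vecs (Suc r) m \<and> bin_value (Uset r m \<alpha>) \<le> s"
proof
  assume "\<alpha> \<in> Omega r m s"
  then obtain l where "l \<le> s" "\<alpha> \<in> vecs (Suc r) m" "Uset r m \<alpha> = suppb m l"
    by (auto simp: Omega_def Gamma_def)
  then show "\<alpha> \<in> vecs (Suc r) m \<and> bin_value (Uset r m \<alpha>) \<le> s"
    by (metis bin_value_suppb mod_less_eq_dividend order_trans)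
next
  assume \<alpha>: "\<alpha> \<in> vecs (Suc r) m \<and> bin_value (Uset r m \<alpha>) \<le> s"
  obtain l where "l < 2 ^ m" "Uset r m \<alpha> = suppb m l"
    using subset_eq_suppb[OF Uset_subset] .
  with \<alpha> show "\<alpha> \<in> Omega r m s"
    unfolding Omega_def Gamma_def by (auto simp: bin_value_suppb)
qed

lemma Omega_pow2_minus_1_iff:
  "\<alpha> \<in> Omega r m (2 ^ k - 1) \<longleftrightarrow> \<alpha> \<in> vecs (Suc r) m \<and> Uset r m \<alpha> \<subseteq> {1..k}"
proof -
  have "bin_value (Uset r m \<alpha>) \<le> 2 ^ k - 1 \<longleftrightarrow> bin_value (Uset r m \<alpha>) < 2 ^ k"
    using zero_less_power[of "2::nat" k] by linarith
  also have "\<dots> \<longleftrightarrow> Uset r m \<alpha> \<subseteq> {1..k}"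
    by (rule bin_value_less_iff[OF Uset_subset])
  finally show ?thesis
    by (simp add: Omega_iff)
qed

lemma bin_value_pos_iff: "finite U \<Longrightarrow> 0 < bin_value U \<longleftrightarrow> U \<noteq> {}"
  unfolding bin_value_def by (auto intro!: sum_pos)

lemma Omega_0_iff: "\<alpha> \<in> Omega r m 0 \<longleftrightarrow> \<alpha> \<in> vecs (Suc r) m \<and> Uset r m \<alpha> = {}"
  using bin_value_pos_iff[of "Uset r m \<alpha>"] by (auto simp: Omega_iff Uset_def)

lemma finite_vecs: "finite (vecs q m)"
proof -
  have "vecs q m = {f. \<forall>l. (l \<in> {1..m} \<longrightarrow> f l \<in> {..<q}) \<and> (l \<notin> {1..m} \<longrightarrow> f l = 0)}"
    by (auto simp: vecs_def)
  then show ?thesis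
    using finite_set_of_finite_funs[of "{1..m}" "{..<q}" 0] by simp
qed

lemma vecs_subset_vecs_Suc: "vecs r m \<subseteq> vecs (Suc r) m"
  by (auto simp: vecs_def less_Suc_eq)

lemma Uset_vecs: "\<beta> \<in> vecs r m \<Longrightarrow> Uset r m \<beta> = {}"
  by (auto simp: vecs_def Uset_def)

lemma Lset_subset_vecs: "Lset r m \<alpha> \<subseteq> vecs r m"
  by (auto simp: Lset_def)

lemma Lset_vecs: "\<beta> \<in> vecs r m \<Longrightarrow> Lset r m \<beta> = {\<beta>}"
  unfolding Lset_def Tset_def vecs_def by (auto simp: fun_eq_iff) (metis atLeastAtMost_iff)

lemma finite_Omega: "finite (Omega r m s)"
  by (rule finite_subset[OF _ finite_vecs[of "Suc r" m]]) (auto simp: Omega_iff)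

lemma Lset_subset_Omega: "Lset r m \<alpha> \<subseteq> Omega r m s"
  using Lset_subset_vecs vecs_subset_vecs_Suc by (fastforce simp: Omega_iff Uset_vecs bin_value_def)

definition parity_checked :: "nat \<Rightarrow> nat \<Rightarrow> nat \<Rightarrow> ((nat \<Rightarrow> nat) \<Rightarrow> bit) set \<Rightarrow> bool" where
  "parity_checked r m t C \<longleftrightarrow>
     (\<forall>x\<in>C. \<forall>\<gamma>\<in>Omega r m t - Omega r m 0. x \<gamma> = (\<Sum>\<beta>\<in>Lset r m \<gamma>. x \<beta>))"

lemma parity_checked_if_Hrow_dual:
  assumes "\<forall>\<gamma>\<in>Omega r m t - Omega r m 0. Hrow r m t \<gamma> \<in> dual_code (Omega r m t) C"
  shows "parity_checked r m t C"
  unfolding parity_checked_def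
proof (intro ballI)
  fix x \<gamma> assume x: "x \<in> C" and \<gamma>: "\<gamma> \<in> Omega r m t - Omega r m 0"
  let ?O = "Omega r m t" and ?L = "Lset r m \<gamma>"
  have "\<gamma> \<notin> ?L"
  proof
    assume "\<gamma> \<in> ?L"
    then have "Uset r m \<gamma> = {}"
      using Lset_subset_vecs Uset_vecs by blast
    with \<gamma> show False
      by (simp add: Omega_iff bin_value_def)
  qed
  have "finite ?L"
    using finite_subset[OF Lset_subset_vecs finite_vecs] .
  have "?O \<inter> insert \<gamma> ?L = insert \<gamma> ?L"
    using \<gamma> Lset_subset_Omega by blast
  have "(\<Sum>i\<in>?O. x i * Hrow r m t \<gamma> i) = (\<Sum>i\<in>?O. if i \<in> insert \<gamma> ?L then x i else 0)"
    by (rule sum.cong) (auto simp: Hrow_def)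
  also have "\<dots> = (\<Sum>i\<in>?O \<inter> insert \<gamma> ?L. x i)"
    by (simp add: sum.inter_restrict[OF finite_Omega])
  also have "\<dots> = x \<gamma> + (\<Sum>\<beta>\<in>?L. x \<beta>)"
    using \<open>?O \<inter> insert \<gamma> ?L = insert \<gamma> ?L\<close> \<open>\<gamma> \<notin> ?L\<close> \<open>finite ?L\<close> by simp
  finally have "(\<Sum>i\<in>?O. x i * Hrow r m t \<gamma> i) = x \<gamma> + (\<Sum>\<beta>\<in>?L. x \<beta>)" .
  moreover have "(\<Sum>i\<in>?O. x i * Hrow r m t \<gamma> i) = 0"
    using assms \<gamma> x by (auto simp: dual_code_def)
  ultimately show "x \<gamma> = (\<Sum>\<beta>\<in>?L. x \<beta>)"
    by (cases "x \<gamma>"; cases "\<Sum>\<beta>\<in>?L. x \<beta>") auto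
qed

lemma psi_at [simp]: "psi m0 j \<alpha> m0 = j"
  by (simp add: psi_def)

lemma inj_psi: "inj (psi m0 j)"
proof (rule injI)
  fix \<alpha> \<beta> assume eq: "psi m0 j \<alpha> = psi m0 j \<beta>"
  show "\<alpha> = \<beta>"
  proof
    fix l
    show "\<alpha> l = \<beta> l"
      using fun_cong[OF eq, of l] fun_cong[OF eq, of "Suc l"] by (auto simp: psi_def split: if_splits)
  qed
qed

lemma psi_in_vecs:
  assumes "1 \<le> m0" "m0 \<le> Suc n" "\<alpha> \<in> vecs q n" "j < q"
  shows "psi m0 j \<alpha> \<in> vecs q (Suc n)"
  unfolding vecs_def
proof (intro CollectI conjI allI ballI impI)
  fix l
  have shifted: "l - 1 \<in> {1..n} \<longleftrightarrow> l \<in> {1..Suc n}" if "m0 < l"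
    using that assms(1) by auto
  show "psi m0 j \<alpha> l < q" if "l \<in> {1..Suc n}"
    using assms that shifted by (auto simp: vecs_def psi_def)
  show "psi m0 j \<alpha> l = 0" if "l \<notin> {1..Suc n}"
    using assms that shifted by (auto simp: vecs_def psi_def)
qed

lemma vecs_Suc_obtain_psi:
  assumes "1 \<le> m0" "m0 \<le> Suc n" "\<gamma> \<in> vecs q (Suc n)"
  obtains j \<beta> where "j < q" "\<beta> \<in> vecs q n" "\<gamma> = psi m0 j \<beta>"
proof
  let ?\<beta> = "\<lambda>l. if l < m0 then \<gamma> l else \<gamma> (Suc l)"
  show "\<gamma> m0 < q"
    using assms by (simp add: vecs_def)
  show "?\<beta> \<in> vecs q n"
    using assms by (auto simp: vecs_def)
  show "\<gamma> = psi m0 (\<gamma> m0) ?\<beta>"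
    using assms by (auto simp: psi_def fun_eq_iff)
qed

definition skip_index :: "nat \<Rightarrow> nat \<Rightarrow> nat" where
  "skip_index m0 l = (if l < m0 then l else Suc l)"

lemma psi_skip_index [simp]: "psi m0 j \<alpha> (skip_index m0 l) = \<alpha> l"
  by (simp add: psi_def skip_index_def)

lemma skip_index_neq [simp]: "skip_index m0 l \<noteq> m0"
  by (simp add: skip_index_def)

lemma atLeastAtMost_Suc_skip_index:
  assumes "1 \<le> m0" "m0 \<le> Suc n"
  shows "{1..Suc n} = insert m0 (skip_index m0 ` {1..n})"
proof -
  have "l \<in> skip_index m0 ` {1..n}" if "l \<in> {1..Suc n}" "l \<noteq> m0" for l
  proof -
    let ?l' = "if l < m0 then l else l - 1"
    have "l = skip_index m0 ?l'" "?l' \<in> {1..n}"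
      using that assms by (auto simp: skip_index_def)
    then show ?thesis
      by blast
  qed
  moreover have "skip_index m0 ` {1..n} \<subseteq> {1..Suc n}" "m0 \<in> {1..Suc n}"
    using assms by (auto simp: skip_index_def)
  ultimately show ?thesis
    by blast
qed

lemma Uset_psi:
  assumes "1 \<le> m0" "m0 \<le> Suc n"
  shows "Uset r (Suc n) (psi m0 j \<alpha>) = skip_index m0 ` Uset r n \<alpha> \<union> (if j = r then {m0} else {})"
  unfolding Uset_def atLeastAtMost_Suc_skip_index[OF assms] by auto

lemma Uset_psi_low:
  assumes "1 \<le> m0" "m0 \<le> Suc n" "Uset r n \<alpha> \<subseteq> {1..<m0}"
  shows "Uset r (Suc n) (psi m0 j \<alpha>) = Uset r n \<alpha> \<union> (if j = r then {m0} else {})"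
proof -
  have "skip_index m0 ` Uset r n \<alpha> = Uset r n \<alpha>"
    using assms(3) by (force simp: skip_index_def)
  then show ?thesis
    using Uset_psi[OF assms(1,2)] by simp
qed

lemma Uset_low_if_Uset_psi_low:
  assumes "1 \<le> m0" "m0 \<le> Suc n" "Uset r (Suc n) (psi m0 j \<alpha>) \<subseteq> {1..m0}"
  shows "Uset r n \<alpha> \<subseteq> {1..<m0}"
proof
  fix l assume "l \<in> Uset r n \<alpha>"
  then have "1 \<le> l" "skip_index m0 l \<le> m0"
    using assms Uset_psi[OF assms(1,2)] by (auto simp: Uset_def)
  then show "l \<in> {1..<m0}"
    by (auto simp: skip_index_def split: if_splits)
qed

lemma Lset_iff: "\<beta> \<in> Lset r m \<alpha> \<longleftrightarrow> \<beta> \<in> vecs r m \<and> (\<forall>l\<in>{1..m}. \<alpha> l < r \<longrightarrow> \<beta> l = \<alpha> l)"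
  by (auto simp: Lset_def Tset_def)

lemma psi_in_Lset_psi_iff:
  assumes "1 \<le> m0" "m0 \<le> Suc n" "k < r" "\<beta> \<in> vecs r n"
  shows "psi m0 k \<beta> \<in> Lset r (Suc n) (psi m0 j \<alpha>) \<longleftrightarrow> (j < r \<longrightarrow> k = j) \<and> \<beta> \<in> Lset r n \<alpha>"
  using assms psi_in_vecs[OF assms(1,2,4,3)]
  unfolding Lset_iff atLeastAtMost_Suc_skip_index[OF assms(1,2)] by auto

lemma sum_Lset_psi:
  assumes m0: "1 \<le> m0" "m0 \<le> Suc n" and "j < r"
  shows "(\<Sum>\<gamma>\<in>Lset r (Suc n) (psi m0 j \<alpha>). f \<gamma>) = (\<Sum>\<beta>\<in>Lset r n \<alpha>. f (psi m0 j \<beta>))"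
proof -
  have "Lset r (Suc n) (psi m0 j \<alpha>) = psi m0 j ` Lset r n \<alpha>"
  proof (intro set_eqI iffI)
    fix \<gamma> assume \<gamma>: "\<gamma> \<in> Lset r (Suc n) (psi m0 j \<alpha>)"
    then obtain k \<beta> where k: "k < r" "\<beta> \<in> vecs r n" and "\<gamma> = psi m0 k \<beta>"
      using m0 Lset_subset_vecs vecs_Suc_obtain_psi by blast
    with \<gamma> show "\<gamma> \<in> psi m0 j ` Lset r n \<alpha>"
      using psi_in_Lset_psi_iff[OF m0 k, of j \<alpha>] \<open>j < r\<close> by blast
  next
    fix \<gamma> assume "\<gamma> \<in> psi m0 j ` Lset r n \<alpha>"
    then show "\<gamma> \<in> Lset r (Suc n) (psi m0 j \<alpha>)"
      using psi_in_Lset_psi_iff[OF m0 \<open>j < r\<close>] Lset_subset_vecs by blast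
  qed
  then show ?thesis
    by (simp add: sum.reindex inj_on_subset[OF inj_psi])
qed

lemma sum_Lset_psi_top:
  assumes m0: "1 \<le> m0" "m0 \<le> Suc n"
  shows "(\<Sum>\<gamma>\<in>Lset r (Suc n) (psi m0 r \<alpha>). f \<gamma>) = (\<Sum>k<r. \<Sum>\<beta>\<in>Lset r n \<alpha>. f (psi m0 k \<beta>))"
proof -
  have "Lset r (Suc n) (psi m0 r \<alpha>) = (\<Union>k<r. psi m0 k ` Lset r n \<alpha>)"
  proof (intro set_eqI iffI)
    fix \<gamma> assume \<gamma>: "\<gamma> \<in> Lset r (Suc n) (psi m0 r \<alpha>)"
    then obtain k \<beta> where k: "k < r" "\<beta> \<in> vecs r n" and "\<gamma> = psi m0 k \<beta>"
      using m0 Lset_subset_vecs vecs_Suc_obtain_psi by blast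
    with \<gamma> show "\<gamma> \<in> (\<Union>k<r. psi m0 k ` Lset r n \<alpha>)"
      using psi_in_Lset_psi_iff[OF m0 k, of r \<alpha>] by blast
  next
    fix \<gamma> assume "\<gamma> \<in> (\<Union>k<r. psi m0 k ` Lset r n \<alpha>)"
    then obtain k \<beta> where k: "k < r" "\<beta> \<in> Lset r n \<alpha>" and "\<gamma> = psi m0 k \<beta>"
      by blast
    then show "\<gamma> \<in> Lset r (Suc n) (psi m0 r \<alpha>)"
      using psi_in_Lset_psi_iff[OF m0 k(1), of \<beta> r \<alpha>] Lset_subset_vecs by blast
  qed
  moreover have "finite (Lset r n \<alpha>)"
    by (rule finite_subset[OF Lset_subset_vecs finite_vecs])
  moreover have "psi m0 k ` A \<inter> psi m0 k' ` B = {}" if "k \<noteq> k'" for k k' A B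
    using that by (auto dest: arg_cong[where f = "\<lambda>\<gamma>. \<gamma> m0"])
  ultimately show ?thesis
    by (simp add: sum.UNION_disjoint sum.reindex inj_on_subset[OF inj_psi])
qed

lemma bin_value_Uset_psi_top:
  assumes "K \<le> n" "Uset r n \<alpha> \<subseteq> {1..K}"
  shows "bin_value (Uset r (Suc n) (psi (Suc K) r \<alpha>)) = bin_value (Uset r n \<alpha>) + 2 ^ K"
proof -
  have "Uset r n \<alpha> \<subseteq> {1..<Suc K}"
    using assms(2) by auto
  then have "Uset r (Suc n) (psi (Suc K) r \<alpha>) = insert (Suc K) (Uset r n \<alpha>)"
    using assms(1) Uset_psi_low[of "Suc K" n r \<alpha> r] by simp
  moreover have "Suc K \<notin> Uset r n \<alpha>"
    using assms(2) by auto
  ultimately show ?thesis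
    by (simp add: bin_value_insert Uset_def)
qed

lemma bij_betw_psi_low:
  assumes "K \<le> n" "j < r"
  shows "bij_betw (psi (Suc K) j) (Omega r n (2 ^ K - 1))
           {\<gamma> \<in> Omega r (Suc n) (2 ^ K - 1). \<gamma> (Suc K) = j}"
proof -
  have m0: "1 \<le> Suc K" "Suc K \<le> Suc n"
    using assms by auto
  have low: "{1..<Suc K} = {1..K}"
    by auto
  have "psi (Suc K) j ` Omega r n (2 ^ K - 1) = {\<gamma> \<in> Omega r (Suc n) (2 ^ K - 1). \<gamma> (Suc K) = j}"
  proof (intro set_eqI iffI)
    fix \<gamma> assume "\<gamma> \<in> psi (Suc K) j ` Omega r n (2 ^ K - 1)"
    then obtain \<alpha> where "\<alpha> \<in> Omega r n (2 ^ K - 1)" and \<gamma>: "\<gamma> = psi (Suc K) j \<alpha>"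
      by blast
    then have \<alpha>: "\<alpha> \<in> vecs (Suc r) n" "Uset r n \<alpha> \<subseteq> {1..K}"
      using Omega_pow2_minus_1_iff by blast+
    then have "Uset r (Suc n) \<gamma> = Uset r n \<alpha>"
      using Uset_psi_low[OF m0] low assms(2) \<gamma> by simp
    then show "\<gamma> \<in> {\<gamma> \<in> Omega r (Suc n) (2 ^ K - 1). \<gamma> (Suc K) = j}"
      unfolding mem_Collect_eq Omega_pow2_minus_1_iff
      using \<alpha> \<gamma> psi_in_vecs[OF m0 \<alpha>(1)] assms(2) by simp
  next
    fix \<gamma> assume "\<gamma> \<in> {\<gamma> \<in> Omega r (Suc n) (2 ^ K - 1). \<gamma> (Suc K) = j}"
    then have \<gamma>: "\<gamma> \<in> vecs (Suc r) (Suc n)" "Uset r (Suc n) \<gamma> \<subseteq> {1..K}" "\<gamma> (Suc K) = j"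
      unfolding mem_Collect_eq Omega_pow2_minus_1_iff by simp_all
    then obtain \<beta> where \<beta>: "\<beta> \<in> vecs (Suc r) n" "\<gamma> = psi (Suc K) j \<beta>"
      using vecs_Suc_obtain_psi[OF m0] by (metis psi_at)
    then have "Uset r n \<beta> \<subseteq> {1..K}"
      using Uset_low_if_Uset_psi_low[OF m0] \<gamma>(2) low by fastforce
    with \<beta>(1) have "\<beta> \<in> Omega r n (2 ^ K - 1)"
      using Omega_pow2_minus_1_iff by blast
    with \<beta>(2) show "\<gamma> \<in> psi (Suc K) j ` Omega r n (2 ^ K - 1)"
      by blast
  qed
  then show ?thesis
    by (simp add: bij_betw_def inj_on_subset[OF inj_psi])
qed

lemma bij_betw_psi_top:
  assumes "K \<le> n" "2 ^ K \<le> t" "t < 2 ^ Suc K"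
  shows "bij_betw (psi (Suc K) r) (Omega r n (t - 2 ^ K))
           (Omega r (Suc n) t - Omega r (Suc n) (2 ^ K - 1))"
proof -
  have m0: "1 \<le> Suc K" "Suc K \<le> Suc n"
    using assms by auto
  have low: "{1..<Suc K} = {1..K}"
    by auto
  have "psi (Suc K) r ` Omega r n (t - 2 ^ K) = Omega r (Suc n) t - Omega r (Suc n) (2 ^ K - 1)"
  proof (intro set_eqI iffI)
    fix \<gamma> assume "\<gamma> \<in> psi (Suc K) r ` Omega r n (t - 2 ^ K)"
    then obtain \<alpha> where "\<alpha> \<in> Omega r n (t - 2 ^ K)" and \<gamma>: "\<gamma> = psi (Suc K) r \<alpha>"
      by blast
    then have \<alpha>: "\<alpha> \<in> vecs (Suc r) n" "bin_value (Uset r n \<alpha>) \<le> t - 2 ^ K"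
      by (simp_all add: Omega_iff)
    then have "Uset r n \<alpha> \<subseteq> {1..K}"
      using assms(3) bin_value_less_iff[OF Uset_subset] by fastforce
    then have "bin_value (Uset r (Suc n) \<gamma>) = bin_value (Uset r n \<alpha>) + 2 ^ K"
      using \<gamma> bin_value_Uset_psi_top assms(1) by simp
    then have "bin_value (Uset r (Suc n) \<gamma>) \<le> t" "\<not> bin_value (Uset r (Suc n) \<gamma>) \<le> 2 ^ K - 1"
      using \<alpha>(2) assms(2) zero_less_power[of "2::nat" K] by linarith+
    then show "\<gamma> \<in> Omega r (Suc n) t - Omega r (Suc n) (2 ^ K - 1)"
      using \<gamma> psi_in_vecs[OF m0 \<alpha>(1)] by (simp add: Omega_iff)
  next
    fix \<gamma> assume "\<gamma> \<in> Omega r (Suc n) t - Omega r (Suc n) (2 ^ K - 1)"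
    then have \<gamma>: "\<gamma> \<in> vecs (Suc r) (Suc n)" "bin_value (Uset r (Suc n) \<gamma>) \<le> t"
      "2 ^ K \<le> bin_value (Uset r (Suc n) \<gamma>)"
      by (auto simp: Omega_iff)
    obtain k \<beta> where "k < Suc r" and \<beta>: "\<beta> \<in> vecs (Suc r) n" "\<gamma> = psi (Suc K) k \<beta>"
      using vecs_Suc_obtain_psi[OF m0 \<gamma>(1)] .
    have "Uset r (Suc n) \<gamma> \<subseteq> {1..Suc K}"
      using \<gamma>(2) assms(3) bin_value_less_iff[OF Uset_subset] by fastforce
    then have \<beta>_low: "Uset r n \<beta> \<subseteq> {1..K}"
      using Uset_low_if_Uset_psi_low[OF m0] \<beta>(2) low by blast
    have "k = r"
    proof (rule ccontr)
      assume "k \<noteq> r"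
      then have "Uset r (Suc n) \<gamma> = Uset r n \<beta>"
        using Uset_psi_low[OF m0] \<beta>(2) \<beta>_low low by simp
      then show False
        using \<gamma>(3) \<beta>_low bin_value_less by (metis leD)
    qed
    then have "bin_value (Uset r n \<beta>) \<le> t - 2 ^ K"
      using \<gamma>(2) \<beta> \<beta>_low bin_value_Uset_psi_top assms(1) by fastforce
    with \<beta> \<open>k = r\<close> show "\<gamma> \<in> psi (Suc K) r ` Omega r n (t - 2 ^ K)"
      by (auto simp: Omega_iff)
  qed
  then show ?thesis
    by (simp add: bij_betw_def inj_on_subset[OF inj_psi])
qed

lemma parity_checked_image_comp:
  "parity_checked r m t ((\<lambda>x. x \<circ> f) ` C) \<longleftrightarrow>
     (\<forall>x\<in>C. \<forall>\<alpha>\<in>Omega r m t - Omega r m 0. x (f \<alpha>) = (\<Sum>\<beta>\<in>Lset r m \<alpha>. x (f \<beta>)))"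
  by (simp add: parity_checked_def)

lemma parity_checked_psi_low:
  assumes C: "parity_checked r (Suc n) t C" and "K \<le> n" "2 ^ K \<le> t" "j < r"
  shows "parity_checked r n (2 ^ K - 1) ((\<lambda>x. x \<circ> psi (Suc K) j) ` C)"
  unfolding parity_checked_def
proof (intro ballI, elim imageE)
  fix y x \<alpha> assume "\<alpha> \<in> Omega r n (2 ^ K - 1) - Omega r n 0" and x: "x \<in> C" and y: "y = x \<circ> psi (Suc K) j"
  then have \<alpha>: "\<alpha> \<in> vecs (Suc r) n" "Uset r n \<alpha> \<subseteq> {1..K}" "Uset r n \<alpha> \<noteq> {}"
    using Omega_pow2_minus_1_iff Omega_0_iff by blast+
  have m0: "1 \<le> Suc K" "Suc K \<le> Suc n"
    using assms by auto
  have "Uset r (Suc n) (psi (Suc K) j \<alpha>) = Uset r n \<alpha>"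
    using Uset_psi_low[OF m0] \<alpha>(2) \<open>j < r\<close> by fastforce
  moreover have "bin_value (Uset r n \<alpha>) \<le> t"
    using bin_value_less[OF \<alpha>(2)] \<open>2 ^ K \<le> t\<close> by simp
  ultimately have "psi (Suc K) j \<alpha> \<in> Omega r (Suc n) t - Omega r (Suc n) 0"
    using psi_in_vecs[OF m0 \<alpha>(1)] \<open>j < r\<close> \<alpha>(3) bin_value_pos_iff[of "Uset r n \<alpha>"]
    by (simp add: Omega_iff Uset_def)
  then have "x (psi (Suc K) j \<alpha>) = (\<Sum>\<gamma>\<in>Lset r (Suc n) (psi (Suc K) j \<alpha>). x \<gamma>)"
    using C x unfolding parity_checked_def by blast
  then show "y \<alpha> = (\<Sum>\<beta>\<in>Lset r n \<alpha>. y \<beta>)"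
    using sum_Lset_psi[OF m0 \<open>j < r\<close>] y by simp
qed

lemma codeword_psi_top:
  assumes C: "parity_checked r (Suc n) t C" and "x \<in> C" "K \<le> n"
    and \<alpha>: "\<alpha> \<in> vecs (Suc r) n" "Uset r n \<alpha> \<subseteq> {1..K}" "bin_value (Uset r n \<alpha>) + 2 ^ K \<le> t"
  shows "x (psi (Suc K) r \<alpha>) = (\<Sum>k<r. \<Sum>\<beta>\<in>Lset r n \<alpha>. x (psi (Suc K) k \<beta>))"
proof -
  have m0: "1 \<le> Suc K" "Suc K \<le> Suc n"
    using assms by auto
  have "Suc K \<in> Uset r (Suc n) (psi (Suc K) r \<alpha>)"
    using m0 by (simp add: Uset_def)
  then have "psi (Suc K) r \<alpha> \<in> Omega r (Suc n) t - Omega r (Suc n) 0"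
    using psi_in_vecs[OF m0 \<alpha>(1)] bin_value_Uset_psi_top[OF \<open>K \<le> n\<close> \<alpha>(2)] \<alpha>(3)
    by (auto simp: Omega_iff Omega_0_iff)
  then have "x (psi (Suc K) r \<alpha>) = (\<Sum>\<gamma>\<in>Lset r (Suc n) (psi (Suc K) r \<alpha>). x \<gamma>)"
    using C \<open>x \<in> C\<close> unfolding parity_checked_def by blast
  then show ?thesis
    using sum_Lset_psi_top[OF m0] by simp
qed

lemma parity_checked_psi_top:
  assumes C: "parity_checked r (Suc n) t C" and "K \<le> n" "2 ^ K \<le> t" "t < 2 ^ Suc K"
  shows "parity_checked r n (t - 2 ^ K) ((\<lambda>x. x \<circ> psi (Suc K) r) ` C)"
  unfolding parity_checked_def
proof (intro ballI, elim imageE)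
  fix y x \<alpha> assume "\<alpha> \<in> Omega r n (t - 2 ^ K) - Omega r n 0" and x: "x \<in> C" and y: "y = x \<circ> psi (Suc K) r"
  then have \<alpha>: "\<alpha> \<in> vecs (Suc r) n" "bin_value (Uset r n \<alpha>) + 2 ^ K \<le> t"
    using \<open>2 ^ K \<le> t\<close> by (auto simp: Omega_iff)
  then have "Uset r n \<alpha> \<subseteq> {1..K}"
    using \<open>t < 2 ^ Suc K\<close> bin_value_less_iff[OF Uset_subset] by fastforce
  then have "x (psi (Suc K) r \<alpha>) = (\<Sum>k<r. \<Sum>\<beta>\<in>Lset r n \<alpha>. x (psi (Suc K) k \<beta>))"
    using codeword_psi_top[OF C x \<open>K \<le> n\<close> \<alpha>(1) _ \<alpha>(2)] by blast
  also have "\<dots> = (\<Sum>\<beta>\<in>Lset r n \<alpha>. \<Sum>k<r. x (psi (Suc K) k \<beta>))"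
    by (rule sum.swap)
  also have "\<dots> = (\<Sum>\<beta>\<in>Lset r n \<alpha>. x (psi (Suc K) r \<beta>))"
  proof (rule sum.cong[OF refl])
    fix \<beta> assume "\<beta> \<in> Lset r n \<alpha>"
    then have \<beta>: "\<beta> \<in> vecs r n"
      using Lset_subset_vecs by blast
    have "(\<Sum>k<r. x (psi (Suc K) k \<beta>)) = (\<Sum>k<r. \<Sum>\<beta>'\<in>Lset r n \<beta>. x (psi (Suc K) k \<beta>'))"
      by (rule sum.cong) (simp_all add: Lset_vecs[OF \<beta>])
    also have "\<dots> = x (psi (Suc K) r \<beta>)"
      using codeword_psi_top[OF C x \<open>K \<le> n\<close>] \<beta> vecs_subset_vecs_Suc Uset_vecs \<open>2 ^ K \<le> t\<close>
      by (simp add: subset_iff bin_value_def)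
    finally show "(\<Sum>k<r. x (psi (Suc K) k \<beta>)) = x (psi (Suc K) r \<beta>)" .
  qed
  finally show "y \<alpha> = (\<Sum>\<beta>\<in>Lset r n \<alpha>. y \<beta>)"
    using y by simp
qed

theorem lemma7:
  fixes r m t m0 :: nat and C :: "((nat \<Rightarrow> nat) \<Rightarrow> bit) set"
  assumes "r \<ge> 2" and "m > 1" and "1 \<le> t" and "t \<le> 2 ^ m - 1"
    and "binary_linear_code (Omega r m t) C"
    and "\<forall>\<alpha>\<in>Omega r m t - Omega r m 0. Hrow r m t \<alpha> \<in> dual_code (Omega r m t) C"
    and "1 \<le> m0" and "m0 \<le> m"
    and "2 ^ (m0 - 1) - 1 < t" and "t \<le> 2 ^ m0 - 1"
  shows "(\<forall>j<r.
            bij_betw (psi m0 j) (Omega r (m - 1) (2 ^ (m0 - 1) - 1))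
              {\<alpha>\<in>Omega r m (2 ^ (m0 - 1) - 1). \<alpha> m0 = j} \<and>
            (\<forall>x\<in>C. \<forall>\<alpha>\<in>Omega r (m - 1) (2 ^ (m0 - 1) - 1) - Omega r (m - 1) 0.
               x (psi m0 j \<alpha>) = (\<Sum>\<beta>\<in>Lset r (m - 1) \<alpha>. x (psi m0 j \<beta>))))
       \<and> (t - (2 ^ (m0 - 1) - 1) - 1 \<ge> 1 \<longrightarrow>
            bij_betw (psi m0 r) (Omega r (m - 1) (t - (2 ^ (m0 - 1) - 1) - 1))
              (Omega r m t - Omega r m (2 ^ (m0 - 1) - 1)) \<and>
            (\<forall>x\<in>C. \<forall>\<alpha>\<in>Omega r (m - 1) (t - (2 ^ (m0 - 1) - 1) - 1) - Omega r (m - 1) 0.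
               x (psi m0 r \<alpha>) = (\<Sum>\<beta>\<in>Lset r (m - 1) \<alpha>. x (psi m0 r \<beta>))))"
proof -
  obtain n where n: "m = Suc n"
    using \<open>m > 1\<close> by (cases m) auto
  obtain K where K: "m0 = Suc K"
    using \<open>1 \<le> m0\<close> by (cases m0) auto
  have "K \<le> n"
    using \<open>m0 \<le> m\<close> n K by simp
  have t: "2 ^ K \<le> t" "t < 2 ^ Suc K" "t - (2 ^ K - 1) - 1 = t - 2 ^ K"
    using assms(9,10) K zero_less_power[of "2::nat" K] by auto
  have C: "parity_checked r (Suc n) t C"
    using parity_checked_if_Hrow_dual assms(6) n by simp
  show ?thesis
    unfolding n K diff_Suc_1 t(3)
    using bij_betw_psi_low[OF \<open>K \<le> n\<close>] bij_betw_psi_top[OF \<open>K \<le> n\<close> t(1,2)]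
      parity_checked_psi_low[OF C \<open>K \<le> n\<close> t(1), unfolded parity_checked_image_comp]
      parity_checked_psi_top[OF C \<open>K \<le> n\<close> t(1,2), unfolded parity_checked_image_comp]
    by simp
qed

end
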